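(* If $H$ is a butterfly minor of a digraph $D$, then $\operatorname{dbw}(H)\le\operatorname{dbw}(D)$.
   Context: All digraphs are finite and loopless. An edge $\vec{xy}$ of $D$ is a butterfly edge if $x$ has out-degree $1$ and $y$ has in-degree $1$. Contracting $\vec{xy}$ removes $\vec{xy}$, $x$, $y$ and adds a new vertex with in-neighbourhood $(N^-(x)\cup N^-(y))\setminus\{x,y\}$ and out-neighbourhood $(N^+(x)\cup N^+(y))\setminus\{x,y\}$. $H$ is a butterfly minor of $D$ if it is obtained from a subgraph of $D$ by a sequence of contractions of butterfly edges. Directed branch-width: for $X\subseteq E(D)$, $S^V_X=\{y: \exists x,z,\ \vec{xy}\in E(D)\setminus X,\ \vec{yz}\in X\}$; $\operatorname{dbw}(D)$ is the minimum over $(T,\beta)$ ($T$ a tree of maximum degree at most three, $\beta$ a bijection from leaves onto $E(D)$) of the maximum over tree edges of $|S^V_{\beta(Y)}\cup S^V_{E(D)\setminus\beta(Y)}|$, $Y$ the leaves on one side (0 if no tree edges). *)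

theory Defs
  imports Main
begin

type_synonym 'a digraph = "'a set \<times> ('a \<times> 'a) set"

definition digraph :: "'a digraph \<Rightarrow> bool" where
  "digraph D \<longleftrightarrow> finite (fst D) \<and> snd D \<subseteq> fst D \<times> fst D \<and> (\<forall>v. (v, v) \<notin> snd D)"

definition in_nbrs :: "'a digraph \<Rightarrow> 'a \<Rightarrow> 'a set" where
  "in_nbrs D v = {u. (u, v) \<in> snd D}"

definition out_nbrs :: "'a digraph \<Rightarrow> 'a \<Rightarrow> 'a set" where
  "out_nbrs D v = {w. (v, w) \<in> snd D}"

definition butterfly_edge :: "'a digraph \<Rightarrow> 'a \<Rightarrow> 'a \<Rightarrow> bool" where
  "butterfly_edge D x y \<longleftrightarrow> (x, y) \<in> snd D \<and> card (out_nbrs D x) = 1 \<and> card (in_nbrs D y) = 1"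

text \<open>Contraction of the arc xy; the new vertex is given the name z, which must be
  fresh, i.e. not among the remaining vertices (z may reuse the name x or y).\<close>

definition contract :: "'a digraph \<Rightarrow> 'a \<Rightarrow> 'a \<Rightarrow> 'a \<Rightarrow> 'a digraph" where
  "contract D x y z =
     ((fst D - {x, y}) \<union> {z},
      {(u, v). (u, v) \<in> snd D \<and> u \<notin> {x, y} \<and> v \<notin> {x, y}}
      \<union> {(u, z) | u. u \<in> (in_nbrs D x \<union> in_nbrs D y) - {x, y}}
      \<union> {(z, w) | w. w \<in> (out_nbrs D x \<union> out_nbrs D y) - {x, y}})"

definition subdigraph :: "'a digraph \<Rightarrow> 'a digraph \<Rightarrow> bool" where
  "subdigraph H D \<longleftrightarrow> fst H \<subseteq> fst D \<and> snd H \<subseteq> snd D \<and> snd H \<subseteq> fst H \<times> fst H"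

inductive bminor_seq :: "'a digraph \<Rightarrow> 'a digraph \<Rightarrow> bool" where
  sub: "subdigraph H D \<Longrightarrow> bminor_seq H D"
| contr: "bminor_seq H D \<Longrightarrow> butterfly_edge H x y \<Longrightarrow> z \<notin> fst H - {x, y}
           \<Longrightarrow> bminor_seq (contract H x y z) D"

definition digraph_iso :: "'a digraph \<Rightarrow> 'b digraph \<Rightarrow> bool" where
  "digraph_iso D H \<longleftrightarrow> (\<exists>f. bij_betw f (fst D) (fst H) \<and>
      snd H = (\<lambda>(u, v). (f u, f v)) ` snd D)"

definition butterfly_minor :: "'b digraph \<Rightarrow> 'a digraph \<Rightarrow> bool" where
  "butterfly_minor H D \<longleftrightarrow> (\<exists>D'. bminor_seq D' D \<and> digraph_iso D' H)"

definition tree_adj :: "nat set set \<Rightarrow> (nat \<times> nat) set" where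
  "tree_adj F = {(u, v). {u, v} \<in> F}"

definition utree :: "nat set \<Rightarrow> nat set set \<Rightarrow> bool" where
  "utree N F \<longleftrightarrow> finite N \<and> N \<noteq> {}
     \<and> F \<subseteq> {{u, v} | u v. u \<in> N \<and> v \<in> N \<and> u \<noteq> v}
     \<and> (\<forall>u\<in>N. \<forall>v\<in>N. (u, v) \<in> (tree_adj F)\<^sup>*)
     \<and> (\<forall>u v. {u, v} \<in> F \<longrightarrow> (u, v) \<notin> (tree_adj (F - {{u, v}}))\<^sup>*)"

definition tdegree :: "nat set set \<Rightarrow> nat \<Rightarrow> nat" where
  "tdegree F v = card {e \<in> F. v \<in> e}"

definition tleaves :: "nat set \<Rightarrow> nat set set \<Rightarrow> nat set" where
  "tleaves N F = {v \<in> N. tdegree F v \<le> 1}"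

definition side_leaves :: "nat set \<Rightarrow> nat set set \<Rightarrow> nat \<Rightarrow> nat \<Rightarrow> nat set" where
  "side_leaves N F a b = {l \<in> tleaves N F. (a, l) \<in> (tree_adj (F - {{a, b}}))\<^sup>*}"

definition SV :: "('a \<times> 'a) set \<Rightarrow> ('a \<times> 'a) set \<Rightarrow> 'a set" where
  "SV E X = {y. \<exists>x z. (x, y) \<in> E - X \<and> (y, z) \<in> X}"

definition dbw_width :: "('a \<times> 'a) set \<Rightarrow> ('a \<times> 'a) set \<Rightarrow> nat" where
  "dbw_width E X = card (SV E X \<union> SV E (E - X))"

definition branch_decomp :: "'a digraph \<Rightarrow> nat set \<Rightarrow> nat set set \<Rightarrow> (nat \<Rightarrow> 'a \<times> 'a) \<Rightarrow> bool" where
  "branch_decomp D N F \<beta> \<longleftrightarrow> utree N F \<and> (\<forall>v\<in>N. tdegree F v \<le> 3)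
      \<and> bij_betw \<beta> (tleaves N F) (snd D)"

definition decomp_width :: "'a digraph \<Rightarrow> nat set \<Rightarrow> nat set set \<Rightarrow> (nat \<Rightarrow> 'a \<times> 'a) \<Rightarrow> nat" where
  "decomp_width D N F \<beta> =
     Max ({0} \<union> {dbw_width (snd D) (\<beta> ` side_leaves N F a b) | a b. {a, b} \<in> F})"

definition dbw :: "'a digraph \<Rightarrow> nat" where
  "dbw D = (if snd D = {} then 0
            else Inf {decomp_width D N F \<beta> | N F \<beta>. branch_decomp D N F \<beta>})"

end

theory Submission
  imports Defs
begin

text \<open>Each butterfly-minor step, and an isomorphism, is described by a vertex map r and a set
  E0 of arcs of D such that (u, v) \<mapsto> (r u, r v) maps E0 bijectively onto the arcs of H, and r
  glues the head of one arc of E0 to the tail of another only if they are equal or joined by an arc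
  of D: r is the identity for a subgraph, the map merging x and y into z for a contraction, and the
  isomorphism itself. In an optimal branch decomposition of D, repeatedly delete leaves not
  labelled by E0; the tree stays subcubic and every surviving tree edge separates the surviving
  leaves as before. Relabelled through the arc map this is a branch decomposition of H, and a
  vertex of H entered by an arc outside a side X and left by an arc inside it comes, by the gluing
  condition, from such a vertex of D, so no edge width increases.\<close>

section \<open>Subcubic trees\<close>

lemma tree_adj_sym: "(u, v) \<in> tree_adj F \<Longrightarrow> (v, u) \<in> tree_adj F"
  by (simp add: tree_adj_def insert_commute)

lemma tree_adj_rtrancl_sym: "(u, v) \<in> (tree_adj F)\<^sup>* \<Longrightarrow> (v, u) \<in> (tree_adj F)\<^sup>*"
  by (induction rule: rtrancl_induct)
    (auto intro: converse_rtrancl_into_rtrancl tree_adj_sym)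

lemma tree_adj_rtrancl_mono:
  "F \<subseteq> F' \<Longrightarrow> (u, v) \<in> (tree_adj F)\<^sup>* \<Longrightarrow> (u, v) \<in> (tree_adj F')\<^sup>*"
  by (rule rtrancl_mono[THEN subsetD]) (auto simp: tree_adj_def)

lemma tree_adj_rtrancl_isolated:
  "(u, v) \<in> (tree_adj F)\<^sup>* \<Longrightarrow> \<forall>e\<in>F. u \<notin> e \<Longrightarrow> v = u"
  by (erule converse_rtranclE) (auto simp: tree_adj_def)

lemma tree_adj_rtrancl_Diff_edge:
  assumes "(a, v) \<in> (tree_adj F)\<^sup>*" and "{a, b} \<in> F"
  shows "(a, v) \<in> (tree_adj (F - {{a, b}}))\<^sup>* \<or> (b, v) \<in> (tree_adj (F - {{a, b}}))\<^sup>*"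
  using assms(1)
proof (induction rule: rtrancl_induct)
  case (step u w)
  show ?case
  proof (cases "{u, w} = {a, b}")
    case True
    then have "w = a \<or> w = b" by (metis doubleton_eq_iff)
    then show ?thesis by auto
  next
    case False
    then have "(u, w) \<in> tree_adj (F - {{a, b}})" using step(2) by (auto simp: tree_adj_def)
    then show ?thesis using step(3) by (meson rtrancl.rtrancl_into_rtrancl)
  qed
qed simp

lemma utreeD:
  assumes "utree N F"
  shows "finite N" "N \<noteq> {}" "F \<subseteq> {{u, v} | u v. u \<in> N \<and> v \<in> N \<and> u \<noteq> v}"
    "\<And>u v. u \<in> N \<Longrightarrow> v \<in> N \<Longrightarrow> (u, v) \<in> (tree_adj F)\<^sup>*"
    "\<And>u v. {u, v} \<in> F \<Longrightarrow> (u, v) \<notin> (tree_adj (F - {{u, v}}))\<^sup>*"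
  using assms unfolding utree_def by auto

lemma utree_finite_edges: "utree N F \<Longrightarrow> finite F"
  using utreeD(1,3) by (fastforce intro: finite_subset[of F "Pow N"])

lemma utree_finite_edge_elems: "utree N F \<Longrightarrow> e \<in> F \<Longrightarrow> finite e"
  using utreeD(3) by fastforce

lemma utree_edgeD: "utree N F \<Longrightarrow> {a, b} \<in> F \<Longrightarrow> a \<in> N \<and> b \<in> N \<and> a \<noteq> b"
  using utreeD(3) by (smt (verit) doubleton_eq_iff mem_Collect_eq subsetD)

lemma utree_sides_disjoint:
  assumes "utree N F" and "{a, b} \<in> F"
    and "(a, l) \<in> (tree_adj (F - {{a, b}}))\<^sup>*" and "(b, l) \<in> (tree_adj (F - {{a, b}}))\<^sup>*"
  shows False
  using utreeD(5)[OF assms(1,2)] assms(3) tree_adj_rtrancl_sym[OF assms(4)]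
  by (meson rtrancl_trans)

lemma tdegree_mono: "F' \<subseteq> F \<Longrightarrow> finite F \<Longrightarrow> tdegree F' x \<le> tdegree F x"
  unfolding tdegree_def by (rule card_mono) auto

lemma utree_leaf_edge:
  assumes u: "utree N F" and "l \<in> N" "tdegree F l \<le> 1" and "v \<in> N" "v \<noteq> l"
  obtains p where "p \<in> N" "p \<noteq> l" "{e \<in> F. l \<in> e} = {{l, p}}"
proof -
  have "{e \<in> F. l \<in> e} \<noteq> {}"
    using tree_adj_rtrancl_isolated[OF utreeD(4)[OF u \<open>l \<in> N\<close> \<open>v \<in> N\<close>]] \<open>v \<noteq> l\<close> by auto
  moreover have "finite {e \<in> F. l \<in> e}" using utree_finite_edges[OF u] by simp
  ultimately have "card {e \<in> F. l \<in> e} = 1"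
    using \<open>tdegree F l \<le> 1\<close> unfolding tdegree_def by (auto simp: le_Suc_eq)
  then obtain e where e: "{e \<in> F. l \<in> e} = {e}" by (meson card_1_singletonE)
  then obtain p where "p \<in> N" "p \<noteq> l" "e = {l, p}"
    using utreeD(3)[OF u] by (smt (verit) insert_commute insert_iff mem_Collect_eq singletonD
        singletonI subsetD)
  then show thesis using that e by blast
qed

lemma utree_remove_leaf:
  assumes u: "utree N F" and "l \<in> N" "tdegree F l \<le> 1" and "v \<in> N" "v \<noteq> l"
  shows "utree (N - {l}) {e \<in> F. l \<notin> e}"
proof -
  let ?N = "N - {l}" and ?F = "{e \<in> F. l \<notin> e}"
  obtain p where p: "p \<in> N" "p \<noteq> l" and star: "{e \<in> F. l \<in> e} = {{l, p}}"
    using utree_leaf_edge[OF assms] .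
  have F': "?F = F - {{p, l}}" and pl: "{p, l} \<in> F"
    using star by (auto simp: insert_commute)
  have reach: "(p, w) \<in> (tree_adj ?F)\<^sup>*" if "w \<in> ?N" for w
  proof -
    have "(p, w) \<in> (tree_adj ?F)\<^sup>* \<or> (l, w) \<in> (tree_adj ?F)\<^sup>*"
      using tree_adj_rtrancl_Diff_edge[OF utreeD(4)[OF u p(1)] pl] that unfolding F' by auto
    moreover have "(l, w) \<notin> (tree_adj ?F)\<^sup>*"
      using tree_adj_rtrancl_isolated[of l w ?F] that by blast
    ultimately show ?thesis by blast
  qed
  have "(x, y) \<in> (tree_adj ?F)\<^sup>*" if "x \<in> ?N" "y \<in> ?N" for x y
    using reach[OF that(1)] reach[OF that(2)] by (meson tree_adj_rtrancl_sym rtrancl_trans)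
  moreover have "?F \<subseteq> {{a, b} | a b. a \<in> ?N \<and> b \<in> ?N \<and> a \<noteq> b}"
    using utreeD(3)[OF u] by blast
  moreover have "(a, b) \<notin> (tree_adj (?F - {{a, b}}))\<^sup>*" if "{a, b} \<in> ?F" for a b
    using utreeD(5)[OF u, of a b] tree_adj_rtrancl_mono[of "?F - {{a, b}}" "F - {{a, b}}"] that
    by blast
  ultimately show ?thesis
    using utreeD(1)[OF u] \<open>v \<in> N\<close> \<open>v \<noteq> l\<close> unfolding utree_def by auto
qed

lemma subtree_side_reach:
  assumes u: "utree N F" and u': "utree N' F'" and "F' \<subseteq> F" and ab: "{a, b} \<in> F'" and "l \<in> N'"
  shows "(a, l) \<in> (tree_adj (F' - {{a, b}}))\<^sup>* \<longleftrightarrow> (a, l) \<in> (tree_adj (F - {{a, b}}))\<^sup>*"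
proof
  have mono: "(c, l) \<in> (tree_adj (F - {{a, b}}))\<^sup>*" if "(c, l) \<in> (tree_adj (F' - {{a, b}}))\<^sup>*" for c
    using tree_adj_rtrancl_mono[OF _ that] \<open>F' \<subseteq> F\<close> by blast
  then show "(a, l) \<in> (tree_adj (F' - {{a, b}}))\<^sup>* \<Longrightarrow> (a, l) \<in> (tree_adj (F - {{a, b}}))\<^sup>*" .
  assume al: "(a, l) \<in> (tree_adj (F - {{a, b}}))\<^sup>*"
  have "(a, l) \<in> (tree_adj F')\<^sup>*"
    using utreeD(4)[OF u'] utree_edgeD[OF u' ab] \<open>l \<in> N'\<close> by blast
  from tree_adj_rtrancl_Diff_edge[OF this ab] utree_sides_disjoint[OF u _ al] mono ab \<open>F' \<subseteq> F\<close>
  show "(a, l) \<in> (tree_adj (F' - {{a, b}}))\<^sup>*" by blast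
qed

lemma side_leaves_subtree:
  assumes "utree N F" and "utree N' F'" and "F' \<subseteq> F" and "tleaves N' F' \<subseteq> tleaves N F"
    and "{a, b} \<in> F'"
  shows "side_leaves N' F' a b = side_leaves N F a b \<inter> tleaves N' F'"
  using subtree_side_reach[OF assms(1,2,3,5)] assms(4) unfolding side_leaves_def tleaves_def
  by blast

lemma utree_prune_leaves:
  assumes "utree N F" and "\<forall>x\<in>N. tdegree F x \<le> 3" and "L \<subseteq> tleaves N F" and "L \<noteq> {}"
  shows "\<exists>N' F'. utree N' F' \<and> (\<forall>x\<in>N'. tdegree F' x \<le> 3) \<and> tleaves N' F' = L \<and> F' \<subseteq> F"
  using assms
proof (induction "card N" arbitrary: N F rule: less_induct)
  case less
  note u = less.prems(1)
  show ?case
  proof (cases "tleaves N F = L")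
    case False
    then obtain w where w: "w \<in> tleaves N F" "w \<notin> L" using less.prems(3) by blast
    obtain v where "v \<in> L" using less.prems(4) by blast
    then have wv: "w \<in> N" "tdegree F w \<le> 1" "v \<in> N" "v \<noteq> w"
      using w less.prems(3) unfolding tleaves_def by auto
    define F1 where "F1 = {e \<in> F. w \<notin> e}"
    have u1: "utree (N - {w}) F1" unfolding F1_def by (rule utree_remove_leaf[OF u wv])
    have deg1: "tdegree F1 x \<le> tdegree F x" for x
      by (rule tdegree_mono[OF _ utree_finite_edges[OF u]]) (auto simp: F1_def)
    have "L \<subseteq> tleaves (N - {w}) F1"
      using less.prems(3) w(2) deg1 unfolding tleaves_def by (auto intro: order_trans)
    moreover have "\<forall>x\<in>N - {w}. tdegree F1 x \<le> 3"
      using less.prems(2) deg1 by (auto intro: order_trans)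
    moreover have "card (N - {w}) < card N"
      using wv(1) utreeD(1)[OF u] by (metis card_Diff1_less)
    ultimately show ?thesis
      using less.hyps[OF _ u1 _ _ less.prems(4)] unfolding F1_def by blast
  qed (use less.prems in blast)
qed

lemma tree_adj_rtrancl_retract_pendant:
  assumes "(a, b) \<in> (tree_adj (insert {v, w} F))\<^sup>*" and "\<forall>e\<in>F. w \<notin> e"
  shows "(if a = w then v else a, if b = w then v else b) \<in> (tree_adj F)\<^sup>*"
  using assms(1)
proof (induction rule: rtrancl_induct)
  case (step s t)
  then have "{s, t} = {v, w} \<or> {s, t} \<in> F" by (auto simp: tree_adj_def)
  then show ?case
  proof
    assume "{s, t} = {v, w}"
    then have "s \<in> {v, w}" "t \<in> {v, w}" by blast+
    then show ?thesis using step(3) by auto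
  next
    assume st: "{s, t} \<in> F"
    then have "s \<noteq> w" "t \<noteq> w" using assms(2) by auto
    with st show ?thesis using step(3) by (simp add: tree_adj_def rtrancl_into_rtrancl)
  qed
qed simp

lemma tdegree_add_pendant:
  assumes "finite F" and "\<forall>e\<in>F. w \<notin> e"
  shows "tdegree (insert {v, w} F) x = tdegree F x + (if x = v \<or> x = w then 1 else 0)"
proof -
  have "{v, w} \<notin> F" using assms(2) by auto
  moreover have "{e \<in> insert {v, w} F. x \<in> e} =
      (if x = v \<or> x = w then insert {v, w} {e \<in> F. x \<in> e} else {e \<in> F. x \<in> e})"
    by auto
  ultimately show ?thesis using assms(1) unfolding tdegree_def by simp
qed

lemma utree_add_pendant:
  assumes u: "utree N F" and "v \<in> N" and "w \<notin> N"
  shows "utree (insert w N) (insert {v, w} F)"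
proof -
  let ?F = "insert {v, w} F" and ?N = "insert w N"
  have wF: "\<forall>e\<in>F. w \<notin> e" using utreeD(3)[OF u] \<open>w \<notin> N\<close> by auto
  have "(v, y) \<in> (tree_adj ?F)\<^sup>*" if "y \<in> ?N" for y
  proof (cases "y = w")
    case False
    then show ?thesis
      using utreeD(4)[OF u \<open>v \<in> N\<close>] that tree_adj_rtrancl_mono[of F ?F] by blast
  qed (simp add: tree_adj_def r_into_rtrancl)
  then have "(x, y) \<in> (tree_adj ?F)\<^sup>*" if "x \<in> ?N" "y \<in> ?N" for x y
    using that by (meson tree_adj_rtrancl_sym rtrancl_trans)
  moreover have "?F \<subseteq> {{a, b} | a b. a \<in> ?N \<and> b \<in> ?N \<and> a \<noteq> b}"
    using utreeD(3)[OF u] assms(2,3) by blast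
  moreover have "(a, b) \<notin> (tree_adj (?F - {{a, b}}))\<^sup>*" if ab: "{a, b} \<in> ?F" for a b
  proof
    assume path: "(a, b) \<in> (tree_adj (?F - {{a, b}}))\<^sup>*"
    show False
    proof (cases "{a, b} = {v, w}")
      case True
      then have "?F - {{a, b}} = F" "a \<noteq> b" "a = w \<or> b = w"
        using wF assms(2,3) by (auto simp: doubleton_eq_iff)
      then show False
        using path tree_adj_rtrancl_isolated[of a b F] tree_adj_rtrancl_isolated[of b a F]
          tree_adj_rtrancl_sym wF by metis
    next
      case False
      then have abF: "{a, b} \<in> F" and "a \<noteq> w" "b \<noteq> w" using ab wF by auto
      moreover have "?F - {{a, b}} = insert {v, w} (F - {{a, b}})" using False by auto
      ultimately show False
        using tree_adj_rtrancl_retract_pendant[of a b v w "F - {{a, b}}"] path wF utreeD(5)[OF u abF]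
        by auto
    qed
  qed
  ultimately show ?thesis unfolding utree_def using utreeD(1)[OF u] by auto
qed

lemma subcubic_utree_with_many_leaves:
  "\<exists>N F. utree N F \<and> (\<forall>x\<in>N. tdegree F x \<le> 3) \<and> n < card (tleaves N F)"
proof (induction n)
  case 0
  have "utree {0} {}" unfolding utree_def tree_adj_def by auto
  moreover have "tleaves {0} {} = {0}" unfolding tleaves_def tdegree_def by auto
  ultimately show ?case
    by (intro exI[of _ "{0}"] exI[of _ "{}"]) (simp add: tdegree_def)
next
  case (Suc n)
  then obtain N F where u: "utree N F" and d: "\<forall>x\<in>N. tdegree F x \<le> 3"
    and c: "n < card (tleaves N F)" by blast
  have finL: "finite (tleaves N F)" using utreeD(1)[OF u] unfolding tleaves_def by auto
  obtain v where v: "v \<in> tleaves N F" using c by fastforce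
  then have vN: "v \<in> N" and dv: "tdegree F v \<le> 1" unfolding tleaves_def by auto
  obtain w1 where w1: "w1 \<notin> N" using ex_new_if_finite[OF infinite_UNIV_nat utreeD(1)[OF u]] by blast
  obtain w2 where w2: "w2 \<notin> insert w1 N"
    using ex_new_if_finite[OF infinite_UNIV_nat finite.insertI[OF utreeD(1)[OF u]]] by blast
  define N2 F1 F2 where "N2 = insert w2 (insert w1 N)" and "F1 = insert {v, w1} F"
    and "F2 = insert {v, w2} F1"
  have u2: "utree N2 F2"
    using utree_add_pendant[OF utree_add_pendant[OF u vN w1] _ w2] vN unfolding N2_def F1_def F2_def
    by blast
  have wF: "\<forall>e\<in>F. w1 \<notin> e \<and> w2 \<notin> e" using utreeD(3)[OF u] w1 w2 by auto
  have vw: "v \<noteq> w1" "v \<noteq> w2" "w1 \<noteq> w2" using vN w1 w2 by auto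
  have "\<forall>e\<in>F1. w2 \<notin> e" using wF vw unfolding F1_def by auto
  then have deg: "tdegree F2 x = tdegree F x + (if x = v then 2 else if x = w1 \<or> x = w2 then 1 else 0)"
    for x
    using tdegree_add_pendant[of F1 w2 v x] tdegree_add_pendant[of F w1 v x] wF vw
      utree_finite_edges[OF u] unfolding F1_def F2_def by auto
  have "{e \<in> F. w1 \<in> e} = {}" "{e \<in> F. w2 \<in> e} = {}" using wF by auto
  then have deg0: "tdegree F w1 = 0" "tdegree F w2 = 0" unfolding tdegree_def by (simp_all only: card.empty)
  have d2: "\<forall>x\<in>N2. tdegree F2 x \<le> 3" using d deg dv deg0 unfolding N2_def by auto
  have "card (tleaves N F - {v} \<union> {w1, w2}) = card (tleaves N F) + 1"
    using finL card_Suc_Diff1[OF finL v] vw w1 w2 unfolding tleaves_def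
    by (subst card_Un_disjoint) auto
  then have "Suc n < card (tleaves N F - {v} \<union> {w1, w2})" using c by simp
  also have "\<dots> \<le> card (tleaves N2 F2)"
    using deg deg0 vw utreeD(1)[OF u2] unfolding tleaves_def N2_def by (intro card_mono) auto
  finally show ?case using u2 d2 by blast
qed

lemma branch_decomp_exists:
  assumes "finite (snd D)" and "snd D \<noteq> {}"
  shows "\<exists>N F \<beta>. branch_decomp D N F \<beta>"
proof -
  obtain N F where u: "utree N F" and d: "\<forall>x\<in>N. tdegree F x \<le> 3"
    and c: "card (snd D) < card (tleaves N F)"
    using subcubic_utree_with_many_leaves by blast
  obtain L where L: "L \<subseteq> tleaves N F" "card L = card (snd D)"
    using obtain_subset_with_card_n[of "card (snd D)" "tleaves N F"] c by auto
  then have "L \<noteq> {}" "finite L" using assms by (auto simp: card_gt_0_iff)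
  obtain N' F' where "utree N' F'" "\<forall>x\<in>N'. tdegree F' x \<le> 3" "tleaves N' F' = L"
    using utree_prune_leaves[OF u d L(1) \<open>L \<noteq> {}\<close>] by blast
  moreover obtain \<beta> where "bij_betw \<beta> L (snd D)"
    using finite_same_card_bij[OF \<open>finite L\<close> assms(1) L(2)] by blast
  ultimately show ?thesis unfolding branch_decomp_def by auto
qed

section \<open>Directed branch-width under arc maps\<close>

lemma SV_iff: "y \<in> SV E X \<longleftrightarrow> (\<exists>x z. (x, y) \<in> E - X \<and> (y, z) \<in> X)"
  by (simp add: SV_def)

lemma SV_I: "(x, y) \<in> E - X \<Longrightarrow> (y, z) \<in> X \<Longrightarrow> y \<in> SV E X"
  unfolding SV_iff by blast

lemma finite_SV: "finite E \<Longrightarrow> finite (SV E X)"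
  by (rule finite_subset[of _ "snd ` E"]) (force simp: SV_def)+

lemma SV_map_prod_subset:
  assumes "Y \<subseteq> E" and "E0 \<subseteq> E"
    and junction: "\<And>p q. p \<in> E0 \<Longrightarrow> q \<in> E0 \<Longrightarrow> r (snd p) = r (fst q) \<Longrightarrow>
      snd p = fst q \<or> (snd p, fst q) \<in> E"
  shows "SV (map_prod r r ` E0) (map_prod r r ` (Y \<inter> E0)) \<subseteq> r ` SV E Y"
proof
  fix v assume "v \<in> SV (map_prod r r ` E0) (map_prod r r ` (Y \<inter> E0))"
  then obtain a b where ab: "(a, v) \<in> map_prod r r ` E0 - map_prod r r ` (Y \<inter> E0)"
    and vb: "(v, b) \<in> map_prod r r ` (Y \<inter> E0)"
    unfolding SV_iff by metis
  obtain p1 p2 where p: "(p1, p2) \<in> E0" "r p1 = a" "r p2 = v"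
    using DiffD1[OF ab] by auto
  have "(p1, p2) \<notin> Y" using DiffD2[OF ab] p by force
  then have pE: "(p1, p2) \<in> E - Y" using p(1) assms(2) by auto
  obtain q1 q2 where q: "(q1, q2) \<in> Y \<inter> E0" "r q1 = v" "r q2 = b"
    using vb by auto
  then have "p2 = q1 \<or> (p2, q1) \<in> E" using junction[of "(p1, p2)" "(q1, q2)"] p by simp
  moreover have "p2 \<in> SV E Y" if "p2 = q1 \<or> (p2, q1) \<in> Y"
    using that SV_I[OF pE, of q2] SV_I[OF pE, of q1] q(1) by blast
  moreover have "q1 \<in> SV E Y" if "(p2, q1) \<in> E - Y"
    using SV_I[OF that, of q2] q(1) by blast
  ultimately have "p2 \<in> SV E Y \<or> q1 \<in> SV E Y" by blast
  then show "v \<in> r ` SV E Y" using p(3) q(2) by (metis image_eqI)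
qed

lemma dbw_width_map_prod_le:
  assumes "finite E" and "X \<subseteq> E" and "E0 \<subseteq> E" and inj: "inj_on (map_prod r r) E0"
    and junction: "\<And>p q. p \<in> E0 \<Longrightarrow> q \<in> E0 \<Longrightarrow> r (snd p) = r (fst q) \<Longrightarrow>
      snd p = fst q \<or> (snd p, fst q) \<in> E"
  shows "dbw_width (map_prod r r ` E0) (map_prod r r ` (X \<inter> E0)) \<le> dbw_width E X"
proof -
  let ?g = "map_prod r r"
  have "(E - X) \<inter> E0 = E0 - X \<inter> E0" using \<open>E0 \<subseteq> E\<close> by blast
  then have "?g ` E0 - ?g ` (X \<inter> E0) = ?g ` ((E - X) \<inter> E0)"
    using inj_on_image_set_diff[OF inj, of E0 "X \<inter> E0"] by simp
  moreover have "SV (?g ` E0) (?g ` (X \<inter> E0)) \<subseteq> r ` SV E X"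
    by (rule SV_map_prod_subset[OF \<open>X \<subseteq> E\<close> \<open>E0 \<subseteq> E\<close> junction])
  moreover have "SV (?g ` E0) (?g ` ((E - X) \<inter> E0)) \<subseteq> r ` SV E (E - X)"
    by (rule SV_map_prod_subset[OF Diff_subset \<open>E0 \<subseteq> E\<close> junction])
  ultimately have "SV (?g ` E0) (?g ` (X \<inter> E0)) \<union> SV (?g ` E0) (?g ` E0 - ?g ` (X \<inter> E0))
      \<subseteq> r ` (SV E X \<union> SV E (E - X))"
    by auto
  then show ?thesis
    unfolding dbw_width_def using finite_SV[OF \<open>finite E\<close>]
    by (meson card_image_le card_mono finite_UnI finite_imageI order_trans)
qed

lemma decomp_width_le_iff:
  assumes "utree N F"
  shows "decomp_width D N F \<beta> \<le> k \<longleftrightarrow>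
    (\<forall>a b. {a, b} \<in> F \<longrightarrow> dbw_width (snd D) (\<beta> ` side_leaves N F a b) \<le> k)"
proof -
  let ?W = "{dbw_width (snd D) (\<beta> ` side_leaves N F a b) | a b. {a, b} \<in> F}"
  have "?W \<subseteq> (\<lambda>(a, b). dbw_width (snd D) (\<beta> ` side_leaves N F a b)) ` (\<Union>F \<times> \<Union>F)"
    by force
  moreover have "finite (\<Union>F \<times> \<Union>F)"
    using utree_finite_edges[OF assms] utree_finite_edge_elems[OF assms] by blast
  ultimately have "finite ?W" by (meson finite_imageI finite_subset)
  then show ?thesis unfolding decomp_width_def by auto
qed

lemma dbw_le_decomp_width: "branch_decomp D N F \<beta> \<Longrightarrow> dbw D \<le> decomp_width D N F \<beta>"
  unfolding dbw_def by (auto intro: cInf_lower)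

lemma dbw_attained:
  assumes "finite (snd D)" and "snd D \<noteq> {}"
  obtains N F \<beta> where "branch_decomp D N F \<beta>" and "dbw D = decomp_width D N F \<beta>"
proof -
  let ?S = "{decomp_width D N F \<beta> | N F \<beta>. branch_decomp D N F \<beta>}"
  have "?S \<noteq> {}" using branch_decomp_exists[OF assms] by blast
  then have "Inf ?S \<in> ?S" by (rule Inf_nat_def1)
  then show thesis using that assms(2) unfolding dbw_def by auto
qed

lemma branch_decomp_restrict:
  assumes bd: "branch_decomp D N F \<beta>" and "E0 \<subseteq> snd D" and "E0 \<noteq> {}"
    and g: "bij_betw g E0 (snd H)"
  obtains N' F' where "branch_decomp H N' F' (g \<circ> \<beta>)" and "F' \<subseteq> F"
    and "\<And>a b. {a, b} \<in> F' \<Longrightarrow>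
      (g \<circ> \<beta>) ` side_leaves N' F' a b = g ` (\<beta> ` side_leaves N F a b \<inter> E0)"
proof -
  have u: "utree N F" and deg: "\<forall>x\<in>N. tdegree F x \<le> 3"
    and \<beta>: "bij_betw \<beta> (tleaves N F) (snd D)"
    using bd unfolding branch_decomp_def by auto
  define L where "L = {l \<in> tleaves N F. \<beta> l \<in> E0}"
  have "L \<subseteq> tleaves N F" unfolding L_def by blast
  have \<beta>L: "bij_betw \<beta> L E0"
    using bij_betw_subset[OF \<beta> \<open>L \<subseteq> tleaves N F\<close>] \<beta> \<open>E0 \<subseteq> snd D\<close>
    unfolding L_def bij_betw_def by blast
  then have "L \<noteq> {}" using \<open>E0 \<noteq> {}\<close> by (auto simp: bij_betw_def)
  then obtain N' F' where u': "utree N' F'" and "\<forall>x\<in>N'. tdegree F' x \<le> 3"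
    and L: "tleaves N' F' = L" and "F' \<subseteq> F"
    using utree_prune_leaves[OF u deg \<open>L \<subseteq> tleaves N F\<close>] by blast
  moreover have "branch_decomp H N' F' (g \<circ> \<beta>)"
    using calculation bij_betw_trans[OF \<beta>L g] unfolding branch_decomp_def by simp
  moreover have "(g \<circ> \<beta>) ` side_leaves N' F' a b = g ` (\<beta> ` side_leaves N F a b \<inter> E0)"
    if "{a, b} \<in> F'" for a b
  proof -
    have "side_leaves N' F' a b = side_leaves N F a b \<inter> L"
      using side_leaves_subtree[OF u u' \<open>F' \<subseteq> F\<close> _ that] L \<open>L \<subseteq> tleaves N F\<close> by simp
    moreover have "\<beta> ` (side_leaves N F a b \<inter> L) = \<beta> ` side_leaves N F a b \<inter> E0"
      unfolding L_def side_leaves_def by auto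
    ultimately show ?thesis by (metis image_comp)
  qed
  ultimately show thesis using that by blast
qed

lemma dbw_le_by_arc_map:
  assumes "finite (snd D)" and "E0 \<subseteq> snd D" and arcs: "snd H = map_prod r r ` E0"
    and inj: "inj_on (map_prod r r) E0"
    and junction: "\<And>p q. p \<in> E0 \<Longrightarrow> q \<in> E0 \<Longrightarrow> r (snd p) = r (fst q) \<Longrightarrow>
      snd p = fst q \<or> (snd p, fst q) \<in> snd D"
  shows "dbw H \<le> dbw D"
proof (cases "snd H = {}")
  case True
  then show ?thesis by (simp add: dbw_def)
next
  case False
  let ?g = "map_prod r r"
  have "E0 \<noteq> {}" "snd D \<noteq> {}" using False arcs \<open>E0 \<subseteq> snd D\<close> by auto
  then obtain N F \<beta> where bd: "branch_decomp D N F \<beta>" and opt: "dbw D = decomp_width D N F \<beta>"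
    using dbw_attained[OF \<open>finite (snd D)\<close>] by blast
  have "bij_betw ?g E0 (snd H)" using inj arcs by (simp add: bij_betw_def)
  then obtain N' F' where bd': "branch_decomp H N' F' (?g \<circ> \<beta>)" and "F' \<subseteq> F"
    and sides: "\<And>a b. {a, b} \<in> F' \<Longrightarrow>
      (?g \<circ> \<beta>) ` side_leaves N' F' a b = ?g ` (\<beta> ` side_leaves N F a b \<inter> E0)"
    using branch_decomp_restrict[OF bd \<open>E0 \<subseteq> snd D\<close> \<open>E0 \<noteq> {}\<close>] by blast
  have u: "utree N F" and u': "utree N' F'"
    using bd bd' unfolding branch_decomp_def by auto
  have "decomp_width H N' F' (?g \<circ> \<beta>) \<le> decomp_width D N F \<beta>"
    unfolding decomp_width_le_iff[OF u']
  proof (intro allI impI)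
    fix a b assume ab: "{a, b} \<in> F'"
    have "\<beta> ` side_leaves N F a b \<subseteq> snd D"
      using bd unfolding branch_decomp_def bij_betw_def side_leaves_def by blast
    then have "dbw_width (snd H) ((?g \<circ> \<beta>) ` side_leaves N' F' a b)
        \<le> dbw_width (snd D) (\<beta> ` side_leaves N F a b)"
      unfolding sides[OF ab] arcs
      using dbw_width_map_prod_le[OF \<open>finite (snd D)\<close> _ \<open>E0 \<subseteq> snd D\<close> inj junction] by blast
    also have "\<dots> \<le> decomp_width D N F \<beta>"
      using decomp_width_le_iff[OF u, of D \<beta> "decomp_width D N F \<beta>"] ab \<open>F' \<subseteq> F\<close> by blast
    finally show "dbw_width (snd H) ((?g \<circ> \<beta>) ` side_leaves N' F' a b) \<le> decomp_width D N F \<beta>" .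
  qed
  then show ?thesis using dbw_le_decomp_width[OF bd'] opt by simp
qed

section \<open>Butterfly minors\<close>

lemma digraph_finite_arcs: "digraph D \<Longrightarrow> finite (snd D)"
  unfolding digraph_def by (auto intro: finite_subset)

lemma dbw_subdigraph_le:
  assumes "subdigraph H D" and "finite (snd D)"
  shows "dbw H \<le> dbw D"
  by (rule dbw_le_by_arc_map[of D "snd H" H id])
    (use assms in \<open>auto simp: subdigraph_def map_prod.id\<close>)

lemma dbw_iso_le:
  assumes "digraph D" and "digraph_iso D H"
  shows "dbw H \<le> dbw D"
proof -
  obtain f where f: "inj_on f (fst D)" and arcs: "snd H = map_prod f f ` snd D"
    using assms(2) unfolding digraph_iso_def bij_betw_def by (auto simp: map_prod_def)
  have sub: "snd D \<subseteq> fst D \<times> fst D" using assms(1) unfolding digraph_def by simp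
  have "inj_on (map_prod f f) (snd D)"
    using map_prod_inj_on[OF f f] sub by (rule inj_on_subset)
  moreover have "snd p = fst q \<or> (snd p, fst q) \<in> snd D"
    if "p \<in> snd D" "q \<in> snd D" "f (snd p) = f (fst q)" for p q
    using inj_onD[OF f that(3)] that(1,2) sub by force
  ultimately show ?thesis
    by (rule dbw_le_by_arc_map[OF digraph_finite_arcs[OF assms(1)] subset_refl arcs])
qed

locale butterfly_contraction =
  fixes H :: "'a digraph" and x y z :: 'a
  assumes digraph: "digraph H"
    and butterfly: "butterfly_edge H x y"
    and fresh: "z \<notin> fst H - {x, y}"
begin

definition merge :: "'a \<Rightarrow> 'a" where
  "merge v = (if v = x \<or> v = y then z else v)"

text \<open>Besides xy itself, the arc yx disappears: it would become a loop at z.\<close>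

definition kept_arcs :: "('a \<times> 'a) set" where
  "kept_arcs = snd H - {(x, y), (y, x)}"

lemma arcs_in_vertices: "(u, v) \<in> snd H \<Longrightarrow> u \<in> fst H \<and> v \<in> fst H"
  using digraph unfolding digraph_def by auto

lemma arc_xy: "(x, y) \<in> snd H"
  using butterfly unfolding butterfly_edge_def by simp

lemma out_arc_x: "(x, w) \<in> snd H \<Longrightarrow> w = y"
  using butterfly arc_xy unfolding butterfly_edge_def out_nbrs_def
  by (metis card_1_singletonE mem_Collect_eq singletonD)

lemma in_arc_y: "(u, y) \<in> snd H \<Longrightarrow> u = x"
  using butterfly arc_xy unfolding butterfly_edge_def in_nbrs_def
  by (metis card_1_singletonE mem_Collect_eq singletonD)

lemma kept_arc_tail: "(u, v) \<in> kept_arcs \<Longrightarrow> u = x \<or> u = y \<Longrightarrow> u = y"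
  using out_arc_x unfolding kept_arcs_def by blast

lemma kept_arc_head: "(u, v) \<in> kept_arcs \<Longrightarrow> v = x \<or> v = y \<Longrightarrow> v = x"
  using in_arc_y unfolding kept_arcs_def by blast

lemma merge_eq:
  assumes "a \<in> fst H" and "b \<in> fst H" and "merge a = merge b"
  shows "a = b \<or> ((a = x \<or> a = y) \<and> (b = x \<or> b = y))"
  using assms fresh unfolding merge_def by (auto split: if_splits)

lemma merged_arc_in_contract:
  assumes uv: "(u, v) \<in> kept_arcs"
  shows "(merge u, merge v) \<in> snd (contract H x y z)"
proof -
  from uv have arc: "(u, v) \<in> snd H" and "(u, v) \<noteq> (y, x)" unfolding kept_arcs_def by auto
  then consider "u = y" "v \<notin> {x, y}" | "u \<notin> {x, y}" "v = x" | "u \<notin> {x, y}" "v \<notin> {x, y}"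
    using kept_arc_tail[OF uv] kept_arc_head[OF uv] by blast
  then show ?thesis
  proof cases
    case 1
    then have "v \<in> out_nbrs H y - {x, y}" using arc unfolding out_nbrs_def by simp
    then show ?thesis using 1 unfolding contract_def merge_def by auto
  next
    case 2
    then have "u \<in> in_nbrs H x - {x, y}" using arc unfolding in_nbrs_def by simp
    then show ?thesis using 2 unfolding contract_def merge_def by auto
  next
    case 3
    then show ?thesis using arc unfolding contract_def merge_def by auto
  qed
qed

lemma contract_arcs: "snd (contract H x y z) = map_prod merge merge ` kept_arcs"
proof
  show "snd (contract H x y z) \<subseteq> map_prod merge merge ` kept_arcs"
  proof
    fix t assume "t \<in> snd (contract H x y z)"
    then consider (keep) u v where "t = (u, v)" "(u, v) \<in> snd H" "u \<notin> {x, y}" "v \<notin> {x, y}"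
      | (into) u where "t = (u, z)" "u \<in> (in_nbrs H x \<union> in_nbrs H y) - {x, y}"
      | (out) w where "t = (z, w)" "w \<in> (out_nbrs H x \<union> out_nbrs H y) - {x, y}"
      unfolding contract_def by auto
    then show "t \<in> map_prod merge merge ` kept_arcs"
    proof cases
      case (keep u v)
      then show ?thesis unfolding kept_arcs_def merge_def by force
    next
      case (into u)
      then have "(u, x) \<in> kept_arcs" using in_arc_y unfolding in_nbrs_def kept_arcs_def by auto
      then show ?thesis using into unfolding merge_def by force
    next
      case (out w)
      then have "(y, w) \<in> kept_arcs" using out_arc_x unfolding out_nbrs_def kept_arcs_def by auto
      then show ?thesis using out unfolding merge_def by force
    qed
  qed
next
  show "map_prod merge merge ` kept_arcs \<subseteq> snd (contract H x y z)"
    using merged_arc_in_contract by auto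
qed

lemma inj_on_kept_arcs: "inj_on (map_prod merge merge) kept_arcs"
proof (rule inj_onI, clarify)
  fix a b c d assume ab: "(a, b) \<in> kept_arcs" and cd: "(c, d) \<in> kept_arcs"
    and eq: "map_prod merge merge (a, b) = map_prod merge merge (c, d)"
  have "a \<in> fst H" "b \<in> fst H" "c \<in> fst H" "d \<in> fst H"
    using ab cd arcs_in_vertices unfolding kept_arcs_def by auto
  then show "a = c \<and> b = d"
    using merge_eq[of a c] merge_eq[of b d] eq kept_arc_tail[OF ab] kept_arc_tail[OF cd]
      kept_arc_head[OF ab] kept_arc_head[OF cd] by auto
qed

lemma kept_arcs_junction:
  assumes "p \<in> kept_arcs" and "q \<in> kept_arcs" and "merge (snd p) = merge (fst q)"
  shows "snd p = fst q \<or> (snd p, fst q) \<in> snd H"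
proof -
  obtain a b c d where p: "p = (a, b)" and q: "q = (c, d)" by fastforce
  have "b \<in> fst H" "c \<in> fst H"
    using assms(1,2) arcs_in_vertices unfolding p q kept_arcs_def by auto
  then have "b = c \<or> ((b = x \<or> b = y) \<and> (c = x \<or> c = y))"
    using merge_eq assms(3) unfolding p q by simp
  then have "b = c \<or> (b = x \<and> c = y)"
    using kept_arc_head[of a b] kept_arc_tail[of c d] assms(1,2) unfolding p q by blast
  then show ?thesis using arc_xy unfolding p q by auto
qed

lemma dbw_contract_le: "dbw (contract H x y z) \<le> dbw H"
  by (rule dbw_le_by_arc_map[OF digraph_finite_arcs[OF digraph] _ contract_arcs inj_on_kept_arcs
        kept_arcs_junction]) (auto simp: kept_arcs_def)

lemma digraph_contract: "digraph (contract H x y z)"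
proof -
  have "finite (fst (contract H x y z))"
    using digraph unfolding digraph_def contract_def by simp
  moreover have "merge u \<in> fst (contract H x y z)" if "u \<in> fst H" for u
    using that unfolding contract_def merge_def by auto
  then have "snd (contract H x y z) \<subseteq> fst (contract H x y z) \<times> fst (contract H x y z)"
    unfolding contract_arcs kept_arcs_def using arcs_in_vertices by auto
  moreover have "merge u \<noteq> merge v" if "(u, v) \<in> kept_arcs" for u v
  proof
    assume "merge u = merge v"
    moreover have "u \<noteq> v" "u \<in> fst H" "v \<in> fst H"
      using that digraph arcs_in_vertices unfolding kept_arcs_def digraph_def by auto
    ultimately have "u = y" "v = x"
      using merge_eq kept_arc_tail[OF that] kept_arc_head[OF that] by blast+
    then show False using that unfolding kept_arcs_def by simp
  qed
  then have "(w, w) \<notin> snd (contract H x y z)" for w unfolding contract_arcs by auto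
  ultimately show ?thesis unfolding digraph_def by blast
qed

end

lemma bminor_seq_digraph: "bminor_seq H D \<Longrightarrow> digraph D \<Longrightarrow> digraph H"
proof (induction rule: bminor_seq.induct)
  case (sub H D)
  then show ?case unfolding digraph_def subdigraph_def by (auto intro: finite_subset)
next
  case (contr H D x y z)
  interpret butterfly_contraction H x y z
    using contr by (simp add: butterfly_contraction_def)
  show ?case by (rule digraph_contract)
qed

lemma bminor_seq_dbw_le: "bminor_seq H D \<Longrightarrow> digraph D \<Longrightarrow> dbw H \<le> dbw D"
proof (induction rule: bminor_seq.induct)
  case (sub H D)
  then show ?case using dbw_subdigraph_le digraph_finite_arcs by blast
next
  case (contr H D x y z)
  interpret butterfly_contraction H x y z
    using bminor_seq_digraph[OF contr.hyps(1) contr.prems] contr.hyps(2,3)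
    by (simp add: butterfly_contraction_def)
  show ?case using dbw_contract_le contr.IH contr.prems by simp
qed

theorem mainTheorem13:
  fixes D :: "'a digraph" and H :: "'b digraph"
  assumes "digraph D"
    and "butterfly_minor H D"
  shows "dbw H \<le> dbw D"
proof -
  obtain D' where D': "bminor_seq D' D" "digraph_iso D' H"
    using assms(2) unfolding butterfly_minor_def by blast
  have "dbw H \<le> dbw D'" by (rule dbw_iso_le[OF bminor_seq_digraph[OF D'(1) assms(1)] D'(2)])
  also have "\<dots> \<le> dbw D" by (rule bminor_seq_dbw_le[OF D'(1) assms(1)])
  finally show ?thesis .
qed

end
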